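(* Let $M,M'\in S_2^+$, let $(e,f)$ be an $M$-reduced basis and $(e',f')$ an $M'$-reduced basis of $\mathbb Z^2$. Let $\tau\ge1$ satisfy $\tau^{-2}M\le M'\le\tau^2M$ in the sense of symmetric matrices. Assume either (i) $2\mu(M)<\lambda_1(M)^2$ and $\tau=1$; or (ii) $4\mu(M)\le\lambda_1(M)^2$ and $\tau^4\le1+\tfrac13\kappa(M)^{-2}$. Then $\{e',f'\}\subset\{e,f,-e,-f\}$.
   Context: $\|e\|_M:=\sqrt{\langle e,Me\rangle}$, and $\kappa(M):=\sqrt{\|M\|\,\|M^{-1}\|}$ (operator norms). An $M$-reduced basis of $\mathbb Z^2$ is a basis $(e_1,e_2)$ (pair in $\mathbb Z^2$ with determinant $\pm1$) such that $\|e_1\|_M=\min\{\|e\|_M:e\in\mathbb Z^2\setminus\{0\}\}$ and $\|e_2\|_M=\min\{\|e\|_M:e\in\mathbb Z^2\setminus e_1\mathbb Z\}$. The Minkowski minima are $\lambda_1(M):=\|e_1\|_M$ and $\lambda_2(M):=\|e_2\|_M$; they are independent of the choice. Also $\mu(M):=|\langle e_1,Me_2\rangle|=\sqrt{\lambda_1(M)^2\lambda_2(M)^2-\det M}$, which is likewise independent of the choice. *)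

theory Defs
  imports "HOL-Analysis.Analysis"
begin

definition rv :: "int^2 \<Rightarrow> real^2" where
  "rv e = (\<chi> i. real_of_int (e $ i))"

definition spd2 :: "real^2^2 \<Rightarrow> bool" where
  "spd2 M \<longleftrightarrow> transpose M = M \<and> (\<forall>x. x \<noteq> 0 \<longrightarrow> x \<bullet> (M *v x) > 0)"

definition normM :: "real^2^2 \<Rightarrow> int^2 \<Rightarrow> real" where
  "normM M e = sqrt (rv e \<bullet> (M *v rv e))"

definition is_basis2 :: "int^2 \<Rightarrow> int^2 \<Rightarrow> bool" where
  "is_basis2 e f \<longleftrightarrow> \<bar>e $ 1 * f $ 2 - e $ 2 * f $ 1\<bar> = 1"

definition reduced_basis :: "real^2^2 \<Rightarrow> int^2 \<Rightarrow> int^2 \<Rightarrow> bool" where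
  "reduced_basis M e1 e2 \<longleftrightarrow> is_basis2 e1 e2
     \<and> (\<forall>v. v \<noteq> 0 \<longrightarrow> normM M e1 \<le> normM M v)
     \<and> (\<forall>v. v \<notin> range (\<lambda>k::int. k *s e1) \<longrightarrow> normM M e2 \<le> normM M v)"

text \<open>A chosen reduced basis; the quantities below are independent of the choice.\<close>
definition some_rb :: "real^2^2 \<Rightarrow> (int^2) \<times> (int^2)" where
  "some_rb M = (SOME p. reduced_basis M (fst p) (snd p))"

definition lambda1 :: "real^2^2 \<Rightarrow> real" where
  "lambda1 M = normM M (fst (some_rb M))"

definition lambda2 :: "real^2^2 \<Rightarrow> real" where
  "lambda2 M = normM M (snd (some_rb M))"

definition mu :: "real^2^2 \<Rightarrow> real" where
  "mu M = \<bar>rv (fst (some_rb M)) \<bullet> (M *v rv (snd (some_rb M)))\<bar>"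

definition kappa :: "real^2^2 \<Rightarrow> real" where
  "kappa M = sqrt (onorm (\<lambda>x. M *v x) * onorm (\<lambda>x. matrix_inv M *v x))"

definition loewner_le :: "real^2^2 \<Rightarrow> real^2^2 \<Rightarrow> bool" where
  "loewner_le A B \<longleftrightarrow> (\<forall>x. x \<bullet> (A *v x) \<le> x \<bullet> (B *v x))"

end

theory Submission
  imports Defs
begin

text \<open>Write \<open>Q v = v \<bullet> M v\<close>, \<open>a = Q e \<le> c = Q f\<close> and \<open>b = e \<bullet> M f\<close>, so that
  \<open>\<lambda>\<^sub>1(M)\<^sup>2 = a\<close> and \<open>\<mu>(M) = \<bar>b\<bar>\<close>. Expanding \<open>Q (x e + y f)\<close> shows that off the two axes
  \<open>\<int>e\<close> and \<open>\<int>f\<close> the form is at least \<open>c + a - 2\<bar>b\<bar>\<close>, which exceeds \<open>\<tau>\<^sup>4 c\<close> under either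
  hypothesis; in case (ii) this uses \<open>c \<le> (17/16) \<kappa>(M)\<^sup>2 a\<close>, which follows from
  \<open>a c - b\<^sup>2 = det M \<le> a \<parallel>M\<parallel>\<close> and \<open>1 \<le> a \<parallel>M\<^sup>-\<^sup>1\<parallel>\<close>. The Loewner bounds give
  \<open>Q v \<le> \<tau>\<^sup>4 Q w\<close> whenever \<open>v\<close> is \<open>M'\<close>-shorter than \<open>w\<close>, so the successive
  \<open>M'\<close>-minima \<open>e'\<close>, \<open>f'\<close> have \<open>Q\<close>-values at most \<open>\<tau>\<^sup>4 c\<close> and therefore lie on the axes; since
  \<open>\<tau>\<^sup>4 < 4\<close> they are \<open>\<plusminus>e\<close> or \<open>\<plusminus>f\<close>.\<close>

lemma inner_matrix_commute_if_symmetric: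
  fixes M :: "real^'n^'n"
  assumes "transpose M = M"
  shows "u \<bullet> (M *v w) = w \<bullet> (M *v u)"
  by (metis assms dot_lmul_matrix inner_commute transpose_matrix_vector)

lemma quadratic_form_add:
  fixes M :: "real^'n^'n"
  assumes "transpose M = M"
  shows "(u + w) \<bullet> (M *v (u + w)) = u \<bullet> (M *v u) + 2 * (u \<bullet> (M *v w)) + w \<bullet> (M *v w)"
  using inner_matrix_commute_if_symmetric[OF assms, of w u]
  by (simp add: matrix_vector_right_distrib inner_add_left inner_add_right)

lemma quadratic_form_cauchy_schwarz:
  fixes M :: "real^'n^'n"
  assumes "transpose M = M" and pos: "\<And>x. x \<noteq> 0 \<Longrightarrow> 0 < x \<bullet> (M *v x)"
  shows "(u \<bullet> (M *v w))\<^sup>2 \<le> (u \<bullet> (M *v u)) * (w \<bullet> (M *v w))"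
proof (cases "w = 0")
  case False
  define A B C where "A = u \<bullet> (M *v u)" and "B = u \<bullet> (M *v w)" and "C = w \<bullet> (M *v w)"
  have "C > 0" using pos False by (simp add: C_def)
  define t where "t = - B / C"
  have "0 \<le> (u + t *\<^sub>R w) \<bullet> (M *v (u + t *\<^sub>R w))"
    using pos[of "u + t *\<^sub>R w"] by (cases "u + t *\<^sub>R w = 0") auto
  also have "\<dots> = A + 2 * t * B + t\<^sup>2 * C"
    unfolding quadratic_form_add[OF assms(1)]
    by (simp add: A_def B_def C_def matrix_vector_mult_scaleR power2_eq_square)
  also have "\<dots> = A - B\<^sup>2 / C"
    using \<open>C > 0\<close> by (simp add: t_def power2_eq_square field_simps)
  finally show ?thesis using \<open>C > 0\<close> by (simp add: A_def B_def C_def field_simps)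
qed simp

lemma matrix_mul_matrix_inv:
  fixes M :: "real^'n^'n"
  assumes "invertible M"
  shows "M ** matrix_inv M = mat 1"
  using someI_ex[OF assms[unfolded invertible_def]] unfolding matrix_inv_def by blast

lemma one_le_onorm_mul_onorm_matrix_inv:
  fixes M :: "real^'n^'n"
  assumes "invertible M"
  shows "1 \<le> onorm ((*v) M) * onorm ((*v) (matrix_inv M))"
proof -
  have "(\<lambda>x. x) = (*v) M \<circ> (*v) (matrix_inv M)"
    using matrix_mul_matrix_inv[OF assms] by (simp add: fun_eq_iff matrix_vector_mul_assoc)
  then have "onorm (\<lambda>x::real^'n. x) \<le> onorm ((*v) M) * onorm ((*v) (matrix_inv M))"
    by (metis matrix_vector_mul_bounded_linear onorm_compose)
  then show ?thesis by (simp add: onorm_id)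
qed

lemma inner_self_le_onorm_matrix_inv_mul_quadratic:
  fixes M :: "real^'n^'n"
  assumes "transpose M = M" and pos: "\<And>x. x \<noteq> 0 \<Longrightarrow> 0 < x \<bullet> (M *v x)" and "invertible M"
  shows "x \<bullet> x \<le> onorm ((*v) (matrix_inv M)) * (x \<bullet> (M *v x))"
proof (cases "x = 0")
  case False
  define N where "N = onorm ((*v) (matrix_inv M))"
  define z where "z = matrix_inv M *v x"
  have Mz: "M *v z = x"
    using matrix_mul_matrix_inv[OF assms(3)] by (simp add: z_def matrix_vector_mul_assoc)
  have "(x \<bullet> x)\<^sup>2 \<le> (x \<bullet> (M *v x)) * (z \<bullet> x)"
    using quadratic_form_cauchy_schwarz[OF assms(1) pos, of x z] by (simp add: Mz)
  also have "\<dots> \<le> (x \<bullet> (M *v x)) * (N * (x \<bullet> x))"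
  proof (rule mult_left_mono)
    have "z \<bullet> x \<le> norm z * norm x" by (rule norm_cauchy_schwarz)
    also have "\<dots> \<le> N * norm x * norm x"
      unfolding z_def N_def by (intro mult_right_mono onorm matrix_vector_mul_bounded_linear) simp
    finally show "z \<bullet> x \<le> N * (x \<bullet> x)" by (simp add: dot_square_norm power2_eq_square)
    show "0 \<le> x \<bullet> (M *v x)" using pos False by (simp add: less_imp_le)
  qed
  finally have "(x \<bullet> x) * (x \<bullet> x) \<le> (N * (x \<bullet> (M *v x))) * (x \<bullet> x)"
    by (simp add: power2_eq_square algebra_simps)
  then show ?thesis using False by (simp add: N_def)
qed simp

lemma symmetric_matrix_2:
  assumes "transpose (M::real^2^2) = M"
  shows "M$2$1 = M$1$2"
proof -
  have "transpose M $ 2 $ 1 = M $ 2 $ 1" using assms by simp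
  then show ?thesis by (simp add: transpose_def)
qed

lemma inner_matrix_vector_mult_2:
  "(x::real^2) \<bullet> (M *v x) = M$1$1 * (x$1)\<^sup>2 + (M$1$2 + M$2$1) * (x$1 * x$2) + M$2$2 * (x$2)\<^sup>2"
  by (simp add: inner_vec_def matrix_vector_mult_def sum_2 power2_eq_square algebra_simps)

lemma spd2_det_pos:
  assumes "spd2 M"
  shows "0 < det M"
proof -
  have sym: "M$2$1 = M$1$2" and pos: "\<And>x. x \<noteq> 0 \<Longrightarrow> 0 < x \<bullet> (M *v x)"
    using assms symmetric_matrix_2 unfolding spd2_def by auto
  have "0 < vector [1, 0] \<bullet> (M *v vector [1, 0])"
    by (rule pos) (simp add: vec_eq_iff forall_2)
  then have "0 < M$1$1" by (simp add: inner_matrix_vector_mult_2)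
  moreover have "0 < vector [- M$1$2, M$1$1] \<bullet> (M *v vector [- M$1$2, M$1$1])"
    using \<open>0 < M$1$1\<close> by (intro pos) (simp add: vec_eq_iff forall_2)
  then have "0 < M$1$1 * det M"
    by (simp add: inner_matrix_vector_mult_2 det_2 sym power2_eq_square algebra_simps)
  ultimately show ?thesis by (simp add: zero_less_mult_iff)
qed

lemma onorm_matrix_inv_mult_det_le:
  fixes M :: "real^2^2"
  assumes sym: "transpose M = M" and det: "0 < det M"
  shows "onorm ((*v) (matrix_inv M)) * det M \<le> onorm ((*v) M)"
proof -
  define rot :: "real^2 \<Rightarrow> real^2" where "rot x = vector [- x$2, x$1]" for x
  have norm_rot: "norm (rot x) = norm x" for x
    by (simp add: rot_def norm_vec_def L2_set_def sum_2 add.commute)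
  \<comment> \<open>for symmetric \<open>M\<close>, conjugating by the quarter turn \<open>rot\<close> gives the adjugate\<close>
  have adjugate: "M *v rot (M *v z) = det M *\<^sub>R rot z" for z
    using symmetric_matrix_2[OF sym]
    by (simp add: rot_def vec_eq_iff forall_2 matrix_vector_mult_def sum_2 det_2 algebra_simps)
  have MM: "M *v (matrix_inv M *v x) = x" for x
    using matrix_mul_matrix_inv[of M] det by (simp add: invertible_det_nz matrix_vector_mul_assoc)
  have "norm (matrix_inv M *v x) \<le> onorm ((*v) M) / det M * norm x" for x
  proof -
    have "det M * norm (matrix_inv M *v x) = norm (M *v rot x)"
      using adjugate[of "matrix_inv M *v x"] det by (simp add: MM norm_rot)
    also have "\<dots> \<le> onorm ((*v) M) * norm x"
      using onorm[OF matrix_vector_mul_bounded_linear] by (metis norm_rot)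
    finally show ?thesis using det by (simp add: field_simps)
  qed
  then have "onorm ((*v) (matrix_inv M)) \<le> onorm ((*v) M) / det M"
    by (intro onorm_le)
  then show ?thesis using det by (simp add: field_simps)
qed

lemma kappa_sq:
  assumes "spd2 M"
  shows "(kappa M)\<^sup>2 = onorm ((*v) M) * onorm ((*v) (matrix_inv M))"
  using one_le_onorm_mul_onorm_matrix_inv[of M] spd2_det_pos[OF assms]
  by (simp add: kappa_def invertible_det_nz)

lemma one_le_kappa:
  assumes "spd2 M"
  shows "1 \<le> kappa M"
  using one_le_onorm_mul_onorm_matrix_inv[of M] spd2_det_pos[OF assms]
  by (simp add: kappa_def invertible_det_nz)

definition lattice_form :: "real^2^2 \<Rightarrow> int^2 \<Rightarrow> int^2 \<Rightarrow> real" where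
  "lattice_form M u v = rv u \<bullet> (M *v rv v)"

lemma rv_eq_0_iff [simp]: "rv v = 0 \<longleftrightarrow> v = 0"
  by (simp add: rv_def vec_eq_iff)

lemma rv_lincomb: "rv (x *s u + y *s v) = of_int x *\<^sub>R rv u + of_int y *\<^sub>R rv v"
  by (simp add: rv_def vec_eq_iff)

lemma one_le_inner_rv:
  assumes "v \<noteq> 0"
  shows "1 \<le> rv v \<bullet> rv v"
proof -
  have "v$1 \<noteq> 0 \<or> v$2 \<noteq> 0" using assms by (auto simp: vec_eq_iff forall_2)
  then have "0 < (v$1)\<^sup>2 + (v$2)\<^sup>2" by (auto simp: add_pos_nonneg add_nonneg_pos)
  then have "1 \<le> real_of_int ((v$1)\<^sup>2 + (v$2)\<^sup>2)" by linarith
  then show ?thesis by (simp add: rv_def inner_vec_def sum_2 power2_eq_square)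
qed

lemma lattice_form_pos:
  assumes "spd2 M" and "v \<noteq> 0"
  shows "0 < lattice_form M v v"
  using assms by (simp add: spd2_def lattice_form_def)

lemma lattice_form_lincomb:
  assumes "transpose M = M"
  shows "lattice_form M (x *s u + y *s v) (x *s u + y *s v)
    = (of_int x)\<^sup>2 * lattice_form M u u + 2 * of_int x * of_int y * lattice_form M u v
      + (of_int y)\<^sup>2 * lattice_form M v v"
  unfolding lattice_form_def rv_lincomb quadratic_form_add[OF assms]
  by (simp add: matrix_vector_mult_scaleR power2_eq_square)

lemma lattice_form_smult: "lattice_form M (k *s v) (k *s v) = k\<^sup>2 * lattice_form M v v"
  using rv_lincomb[of k v 0 v]
  by (simp add: lattice_form_def matrix_vector_mult_scaleR power2_eq_square)

lemma lattice_form_2: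
  "lattice_form M u v = M$1$1 * u$1 * v$1 + M$1$2 * u$1 * v$2 + M$2$1 * u$2 * v$1 + M$2$2 * u$2 * v$2"
  by (simp add: lattice_form_def rv_def inner_vec_def matrix_vector_mult_def sum_2 algebra_simps)

lemma lattice_form_gram:
  assumes "transpose M = M" and "is_basis2 u v"
  shows "lattice_form M u u * lattice_form M v v - (lattice_form M u v)\<^sup>2 = det M"
proof -
  have "\<bar>u$1 * v$2 - u$2 * v$1\<bar> = 1" using assms(2) by (simp add: is_basis2_def)
  then have "(u$1 * v$2 - u$2 * v$1)\<^sup>2 = 1" by (metis power2_abs power_one)
  then have "real_of_int ((u$1 * v$2 - u$2 * v$1)\<^sup>2) = 1" by simp
  then have "(real_of_int (u$1) * v$2 - real_of_int (u$2) * v$1)\<^sup>2 = 1" by simp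
  moreover have "lattice_form M u u * lattice_form M v v - (lattice_form M u v)\<^sup>2
      = (real_of_int (u$1) * v$2 - real_of_int (u$2) * v$1)\<^sup>2 * det M"
    unfolding lattice_form_2 det_2 symmetric_matrix_2[OF assms(1)] by algebra
  ultimately show ?thesis by simp
qed

lemma is_basis2_commute: "is_basis2 u v \<longleftrightarrow> is_basis2 v u"
  unfolding is_basis2_def by (metis abs_minus_commute mult.commute)

lemma is_basis2_nonzero: "is_basis2 u v \<Longrightarrow> u \<noteq> 0"
  by (auto simp: is_basis2_def)

lemma is_basis2_not_multiple: "is_basis2 u v \<Longrightarrow> v \<notin> range (\<lambda>k. k *s u)"
  by (auto simp: is_basis2_def algebra_simps)

lemma range_smult_uminus: "range (\<lambda>k. k *s (- u)) = range (\<lambda>k. k *s (u::int^2))"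
proof -
  have "(\<lambda>k. k *s (- u)) = (\<lambda>k. k *s u) \<circ> uminus" by (simp add: fun_eq_iff vec_eq_iff)
  moreover have "range (uminus :: int \<Rightarrow> int) = UNIV" by (rule surjI[of _ uminus]) simp
  ultimately show ?thesis by (metis image_comp)
qed

lemma is_basis2_lincomb:
  assumes "is_basis2 e f"
  obtains x y where "w = x *s e + y *s f"
proof
  \<comment> \<open>Cramer's rule; the determinant \<open>D = \<plusminus>1\<close> is its own inverse\<close>
  define D where "D = e$1 * f$2 - e$2 * f$1"
  have "D * D = 1" using assms abs_mult_self_eq[of D] by (simp add: is_basis2_def D_def)
  moreover have "(D * (w$1 * f$2 - w$2 * f$1)) * e$i + (D * (e$1 * w$2 - e$2 * w$1)) * f$i = D * D * w$i"
    if "i = 1 \<or> i = 2" for i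
    using that by (auto simp: D_def algebra_simps)
  ultimately show "w = (D * (w$1 * f$2 - w$2 * f$1)) *s e + (D * (e$1 * w$2 - e$2 * w$1)) *s f"
    by (simp add: vec_eq_iff forall_2)
qed

lemma reduced_basis_is_basis2: "reduced_basis M e f \<Longrightarrow> is_basis2 e f"
  by (simp add: reduced_basis_def)

lemma reduced_basis_first_min:
  "reduced_basis M e f \<Longrightarrow> v \<noteq> 0 \<Longrightarrow> lattice_form M e e \<le> lattice_form M v v"
  by (simp add: reduced_basis_def normM_def lattice_form_def)

lemma reduced_basis_second_min:
  "reduced_basis M e f \<Longrightarrow> v \<notin> range (\<lambda>k. k *s e) \<Longrightarrow> lattice_form M f f \<le> lattice_form M v v"
  by (simp add: reduced_basis_def normM_def lattice_form_def)

lemma reduced_basis_second_min_le: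
  assumes red: "reduced_basis M e f" and red0: "reduced_basis M e0 f0"
  shows "lattice_form M f f \<le> lattice_form M f0 f0"
proof (cases "f0 \<in> range (\<lambda>k. k *s e)")
  case True
  then obtain k where "f0 = k *s e" by blast
  with reduced_basis_is_basis2[OF red0] have "e0 \<notin> range (\<lambda>k. k *s e)"
    by (auto simp: is_basis2_def algebra_simps)
  then have "lattice_form M f f \<le> lattice_form M e0 e0"
    using reduced_basis_second_min[OF red] by blast
  also have "\<dots> \<le> lattice_form M f0 f0"
    using reduced_basis_first_min[OF red0] reduced_basis_is_basis2[OF red0]
    by (metis is_basis2_commute is_basis2_nonzero)
  finally show ?thesis .
qed (use reduced_basis_second_min[OF red] in blast)

lemma reduced_basis_minima_eq:
  assumes red: "reduced_basis M e f" and red0: "reduced_basis M e0 f0"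
  shows "lattice_form M e e = lattice_form M e0 e0" and "lattice_form M f f = lattice_form M f0 f0"
proof -
  have "e \<noteq> 0" "e0 \<noteq> 0"
    using is_basis2_nonzero reduced_basis_is_basis2 red red0 by blast+
  then show "lattice_form M e e = lattice_form M e0 e0"
    using reduced_basis_first_min[OF red] reduced_basis_first_min[OF red0] by (simp add: order_antisym)
  show "lattice_form M f f = lattice_form M f0 f0"
    using reduced_basis_second_min_le[OF red red0] reduced_basis_second_min_le[OF red0 red] by simp
qed

lemma reduced_basis_some_rb:
  "reduced_basis M e f \<Longrightarrow> reduced_basis M (fst (some_rb M)) (snd (some_rb M))"
  unfolding some_rb_def by (rule someI[of "\<lambda>p. reduced_basis M (fst p) (snd p)" "(e, f)"]) simp

lemma lambda1_sq:
  assumes "spd2 M" and "reduced_basis M e f"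
  shows "(lambda1 M)\<^sup>2 = lattice_form M e e"
proof -
  note red0 = reduced_basis_some_rb[OF assms(2)]
  have "0 < lattice_form M (fst (some_rb M)) (fst (some_rb M))"
    using lattice_form_pos[OF assms(1)] is_basis2_nonzero reduced_basis_is_basis2[OF red0] by blast
  then show ?thesis
    using reduced_basis_minima_eq(1)[OF assms(2) red0]
    by (simp add: lambda1_def normM_def lattice_form_def)
qed

lemma mu_eq:
  assumes "spd2 M" and "reduced_basis M e f"
  shows "mu M = \<bar>lattice_form M e f\<bar>"
proof -
  note red0 = reduced_basis_some_rb[OF assms(2)]
  have sym: "transpose M = M" using assms(1) by (simp add: spd2_def)
  have "(lattice_form M (fst (some_rb M)) (snd (some_rb M)))\<^sup>2 = (lattice_form M e f)\<^sup>2"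
    using lattice_form_gram[OF sym reduced_basis_is_basis2[OF red0]]
      lattice_form_gram[OF sym reduced_basis_is_basis2[OF assms(2)]]
      reduced_basis_minima_eq[OF assms(2) red0] by simp
  then show ?thesis by (auto simp: mu_def lattice_form_def power2_eq_iff)
qed

lemma binary_form_off_axes_ge:
  fixes x y :: int and a b c :: real
  assumes "x \<noteq> 0" and "y \<noteq> 0" and "a \<le> c" and "2 * \<bar>b\<bar> \<le> a"
  shows "c + a - 2 * \<bar>b\<bar> \<le> (of_int x)\<^sup>2 * a + 2 * of_int x * of_int y * b + (of_int y)\<^sup>2 * c"
proof -
  define X Y where "X = \<bar>real_of_int x\<bar>" and "Y = \<bar>real_of_int y\<bar>"
  have "1 \<le> X" "1 \<le> Y" using assms(1,2) by (simp_all add: X_def Y_def del: of_int_abs flip: of_int_abs)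
  then have "1 \<le> X * Y" "1 \<le> Y\<^sup>2"
    using mult_mono[of 1 X 1 Y] mult_mono[of 1 Y 1 Y] by (simp_all add: power2_eq_square)
  have "c + a - 2 * \<bar>b\<bar> \<le>
      c + a - 2 * \<bar>b\<bar> + a * (X - Y)\<^sup>2 + (c - a) * (Y\<^sup>2 - 1) + 2 * (a - \<bar>b\<bar>) * (X * Y - 1)"
    using assms(3,4) \<open>1 \<le> X * Y\<close> \<open>1 \<le> Y\<^sup>2\<close> by simp
  also have "\<dots> = a * X\<^sup>2 + c * Y\<^sup>2 - 2 * \<bar>b\<bar> * (X * Y)"
    by (simp add: power2_eq_square algebra_simps)
  also have "\<dots> \<le> (of_int x)\<^sup>2 * a + 2 * of_int x * of_int y * b + (of_int y)\<^sup>2 * c"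
    using abs_le_iff[of "x * y * b" "X * Y * \<bar>b\<bar>"] by (simp add: X_def Y_def abs_mult algebra_simps)
  finally show ?thesis .
qed

lemma multiple_eq_pm_if_lattice_form_lt:
  assumes "spd2 M" and "u \<noteq> 0" and "v \<noteq> 0" and "v \<in> range (\<lambda>k. k *s u)"
    and "lattice_form M v v < 4 * lattice_form M u u"
  shows "v = u \<or> v = - u"
proof -
  obtain k where v: "v = k *s u" using assms(4) by blast
  have "0 < lattice_form M u u" using lattice_form_pos[OF assms(1,2)] .
  then have "(real_of_int k)\<^sup>2 < 4" using assms(5) by (simp add: v lattice_form_smult)
  then have "k\<^sup>2 < 4" by (metis of_int_less_numeral_iff of_int_power)
  then have "\<not> 2 \<le> \<bar>k\<bar>" using abs_le_square_iff[of 2 k] by simp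
  moreover have "k \<noteq> 0" using assms(3) v by auto
  ultimately have "k = 1 \<or> k = -1" by linarith
  then show ?thesis by (auto simp: v vec_eq_iff)
qed

lemma on_axis_if_below_off_axes:
  assumes "is_basis2 e f"
    and "\<And>x y. x \<noteq> 0 \<Longrightarrow> y \<noteq> 0 \<Longrightarrow> t < lattice_form M (x *s e + y *s f) (x *s e + y *s f)"
    and "lattice_form M v v \<le> t"
  shows "v \<in> range (\<lambda>k. k *s e) \<or> v \<in> range (\<lambda>k. k *s f)"
proof -
  obtain x y where v: "v = x *s e + y *s f" using is_basis2_lincomb[OF assms(1)] .
  with assms(2,3) have "x = 0 \<or> y = 0" by force
  then show ?thesis using v by auto
qed

lemma reduced_basis_subset_pm_if_off_axes_gap:
  assumes "spd2 M" and red: "reduced_basis M e f" and red': "reduced_basis M' e' f'"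
    and "0 \<le> T" and "T < 4"
    and gap: "\<And>x y. x \<noteq> 0 \<Longrightarrow> y \<noteq> 0 \<Longrightarrow>
      T * lattice_form M f f < lattice_form M (x *s e + y *s f) (x *s e + y *s f)"
    and compare: "\<And>v w. lattice_form M' v v \<le> lattice_form M' w w \<Longrightarrow>
      lattice_form M v v \<le> T * lattice_form M w w"
  shows "{e', f'} \<subseteq> {e, f, -e, -f}"
proof -
  let ?Q = "\<lambda>v. lattice_form M v v"
  have basis: "is_basis2 e f" and basis': "is_basis2 e' f'"
    using red red' by (simp_all add: reduced_basis_is_basis2)
  have nonzero: "e \<noteq> 0" "f \<noteq> 0" "e' \<noteq> 0" "f' \<noteq> 0"
    using basis basis' is_basis2_nonzero is_basis2_commute by blast+
  have "?Q e \<le> ?Q f" using reduced_basis_first_min[OF red nonzero(2)] .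
  then have Te_le_Tf: "T * ?Q e \<le> T * ?Q f" using \<open>0 \<le> T\<close> by (rule mult_left_mono)
  have on_axis: "v \<in> range (\<lambda>k. k *s e) \<or> v \<in> range (\<lambda>k. k *s f)" if "?Q v \<le> T * ?Q f" for v
    using on_axis_if_below_off_axes[OF basis gap that] .
  have pm: "v = u \<or> v = - u"
    if "u \<noteq> 0" and "v \<noteq> 0" and "v \<in> range (\<lambda>k. k *s u)" and "?Q v \<le> T * ?Q u" for u v
  proof (rule multiple_eq_pm_if_lattice_form_lt[OF assms(1) that(1-3)])
    show "?Q v < 4 * ?Q u"
      using that(4) mult_strict_right_mono[OF \<open>T < 4\<close> lattice_form_pos[OF assms(1) that(1)]] by linarith
  qed
  have "?Q e' \<le> T * ?Q e"
    by (rule compare[OF reduced_basis_first_min[OF red' nonzero(1)]])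
  then have e': "e' = e \<or> e' = - e \<or> e' = f \<or> e' = - f"
    using on_axis[of e'] pm[of e e'] pm[of f e'] Te_le_Tf nonzero by fastforce
  have not_on_e': "f' \<notin> range (\<lambda>k. k *s e')"
    using is_basis2_not_multiple[OF basis'] .
  have "f' = f \<or> f' = - f" if "e' = e \<or> e' = - e"
  proof -
    have "range (\<lambda>k. k *s e') = range (\<lambda>k. k *s e)" using that by (metis range_smult_uminus)
    then have "f \<notin> range (\<lambda>k. k *s e')" and off_e: "f' \<notin> range (\<lambda>k. k *s e)"
      using is_basis2_not_multiple[OF basis] not_on_e' by auto
    then have "?Q f' \<le> T * ?Q f" by (intro compare reduced_basis_second_min[OF red'])
    then show ?thesis using on_axis[of f'] pm[of f f'] nonzero off_e by blast
  qed
  moreover have "f' = e \<or> f' = - e" if "e' = f \<or> e' = - f"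
  proof -
    have "range (\<lambda>k. k *s e') = range (\<lambda>k. k *s f)" using that by (metis range_smult_uminus)
    then have "e \<notin> range (\<lambda>k. k *s e')" and off_f: "f' \<notin> range (\<lambda>k. k *s f)"
      using is_basis2_not_multiple[OF is_basis2_commute[THEN iffD1, OF basis]] not_on_e' by auto
    then have "?Q f' \<le> T * ?Q e" by (intro compare reduced_basis_second_min[OF red'])
    then show ?thesis using on_axis[of f'] pm[of e f'] Te_le_Tf nonzero off_f by fastforce
  qed
  ultimately show ?thesis using e' by blast
qed

lemma lattice_form_off_axes_ge:
  assumes "transpose M = M" and red: "reduced_basis M e f"
    and "2 * \<bar>lattice_form M e f\<bar> \<le> lattice_form M e e" and "x \<noteq> 0" and "y \<noteq> 0"
  shows "lattice_form M f f + lattice_form M e e - 2 * \<bar>lattice_form M e f\<bar>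
    \<le> lattice_form M (x *s e + y *s f) (x *s e + y *s f)"
proof -
  have "f \<noteq> 0"
    using is_basis2_nonzero is_basis2_commute reduced_basis_is_basis2[OF red] by metis
  then have "lattice_form M e e \<le> lattice_form M f f" by (rule reduced_basis_first_min[OF red])
  then show ?thesis
    unfolding lattice_form_lincomb[OF assms(1)] by (rule binary_form_off_axes_ge[OF assms(4,5) _ assms(3)])
qed

lemma lattice_form_le_loewner:
  assumes "0 < \<tau>" and "loewner_le ((1 / \<tau>\<^sup>2) *\<^sub>R M) M'" and "loewner_le M' (\<tau>\<^sup>2 *\<^sub>R M)"
    and "lattice_form M' v v \<le> lattice_form M' w w"
  shows "lattice_form M v v \<le> \<tau> ^ 4 * lattice_form M w w"
proof -
  have "(1 / \<tau>\<^sup>2) * lattice_form M v v \<le> lattice_form M' v v"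
    using assms(2) unfolding loewner_le_def lattice_form_def by (simp flip: scaleR_matrix_vector_assoc)
  then have "lattice_form M v v \<le> \<tau>\<^sup>2 * lattice_form M' v v"
    using assms(1) by (simp add: field_simps)
  also have "\<dots> \<le> \<tau>\<^sup>2 * lattice_form M' w w" using assms(4) by (rule mult_left_mono) simp
  also have "\<dots> \<le> \<tau>\<^sup>2 * (\<tau>\<^sup>2 * lattice_form M w w)"
  proof (rule mult_left_mono)
    show "lattice_form M' w w \<le> \<tau>\<^sup>2 * lattice_form M w w"
      using assms(3) unfolding loewner_le_def lattice_form_def by (simp flip: scaleR_matrix_vector_assoc)
  qed simp
  also have "\<dots> = \<tau> ^ 4 * lattice_form M w w" by (simp add: power2_eq_square power4_eq_xxxx)
  finally show ?thesis .
qed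

lemma second_min_le_kappa_sq:
  assumes "spd2 M" and red: "reduced_basis M e f"
    and small: "4 * \<bar>lattice_form M e f\<bar> \<le> lattice_form M e e"
  shows "lattice_form M f f \<le> 17 / 16 * (kappa M)\<^sup>2 * lattice_form M e e"
proof -
  define a b c where "a = lattice_form M e e" and "b = lattice_form M e f" and "c = lattice_form M f f"
  define K N where "K = onorm ((*v) M)" and "N = onorm ((*v) (matrix_inv M))"
  have sym: "transpose M = M" and pos: "\<And>x. x \<noteq> 0 \<Longrightarrow> 0 < x \<bullet> (M *v x)"
    using assms(1) by (simp_all add: spd2_def)
  have det: "0 < det M" using spd2_det_pos[OF assms(1)] .
  have "e \<noteq> 0" using is_basis2_nonzero reduced_basis_is_basis2[OF red] by blast
  then have "0 < a" unfolding a_def by (rule lattice_form_pos[OF assms(1)])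
  have "1 \<le> rv e \<bullet> rv e" using one_le_inner_rv[OF \<open>e \<noteq> 0\<close>] .
  also have "\<dots> \<le> N * a"
    using inner_self_le_onorm_matrix_inv_mul_quadratic[OF sym pos] det
    by (simp add: N_def a_def lattice_form_def invertible_det_nz)
  finally have "1 \<le> a * N" by (simp add: mult.commute)
  have "det M \<le> det M * (a * N)" using \<open>1 \<le> a * N\<close> det by simp
  also have "\<dots> = a * (N * det M)" by simp
  also have "\<dots> \<le> a * K"
    using onorm_matrix_inv_mult_det_le[OF sym det] \<open>0 < a\<close> by (simp add: K_def N_def)
  finally have "det M \<le> a * K" .
  moreover have "a * c = det M + b\<^sup>2"
    using lattice_form_gram[OF sym reduced_basis_is_basis2[OF red]] by (simp add: a_def b_def c_def)
  moreover have "(4 * \<bar>b\<bar>)\<^sup>2 \<le> a\<^sup>2" using small by (intro power_mono) (simp_all add: a_def b_def)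
  ultimately have "a * c \<le> a * (K + a / 16)" by (simp add: power2_eq_square algebra_simps)
  then have "c \<le> K + a / 16" using \<open>0 < a\<close> by simp
  also have "\<dots> \<le> 17 / 16 * (K * N) * a"
  proof -
    have "0 \<le> K" unfolding K_def by (rule onorm_pos_le[OF matrix_vector_mul_bounded_linear])
    then have "K \<le> (K * N) * a" using \<open>1 \<le> a * N\<close> mult_left_mono[of 1 "a * N" K] by (simp add: algebra_simps)
    moreover have "a \<le> (K * N) * a"
      using one_le_onorm_mul_onorm_matrix_inv[of M] det \<open>0 < a\<close> by (simp add: K_def N_def invertible_det_nz)
    ultimately show ?thesis by simp
  qed
  finally show ?thesis using kappa_sq[OF assms(1)] by (simp add: K_def N_def a_def c_def)
qed

lemma off_axes_gap_of_kappa: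
  assumes "spd2 M" and red: "reduced_basis M e f"
    and small: "4 * \<bar>lattice_form M e f\<bar> \<le> lattice_form M e e"
    and T: "T \<le> 1 + 1 / 3 * kappa M powr (-2)"
  shows "T < 4" and "T * lattice_form M f f < lattice_form M f f + lattice_form M e e / 2"
proof -
  define a c where "a = lattice_form M e e" and "c = lattice_form M f f"
  have "1 \<le> kappa M" using one_le_kappa[OF assms(1)] .
  then have T': "T - 1 \<le> 1 / (3 * (kappa M)\<^sup>2)"
    using T by (simp add: powr_minus_divide powr_numeral)
  moreover have "1 \<le> (kappa M)\<^sup>2" using \<open>1 \<le> kappa M\<close> by (simp add: one_le_power)
  then have "1 / (3 * (kappa M)\<^sup>2) \<le> 1" by (simp add: divide_le_eq)
  ultimately show "T < 4" by linarith
  have "e \<noteq> 0" "f \<noteq> 0"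
    using is_basis2_nonzero is_basis2_commute reduced_basis_is_basis2[OF red] by metis+
  then have "0 < a" "0 < c" unfolding a_def c_def using lattice_form_pos[OF assms(1)] by blast+
  have "(T - 1) * c \<le> 1 / (3 * (kappa M)\<^sup>2) * c" using T' \<open>0 < c\<close> by (intro mult_right_mono) simp_all
  also have "\<dots> \<le> 1 / (3 * (kappa M)\<^sup>2) * (17 / 16 * (kappa M)\<^sup>2 * a)"
    using second_min_le_kappa_sq[OF assms(1-3)] by (intro mult_left_mono) (simp_all add: a_def c_def)
  also have "\<dots> = 17 / 48 * a" using \<open>1 \<le> kappa M\<close> by simp
  finally show "T * c < c + a / 2" using \<open>0 < a\<close> by (simp add: algebra_simps)
qed

theorem mainTheorem14:
  fixes M M' :: "real^2^2" and e f e' f' :: "int^2" and \<tau> :: real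
  assumes "spd2 M" and "spd2 M'"
    and "reduced_basis M e f" and "reduced_basis M' e' f'"
    and "\<tau> \<ge> 1"
    and "loewner_le ((1 / \<tau>^2) *\<^sub>R M) M'" and "loewner_le M' (\<tau>^2 *\<^sub>R M)"
    and "(2 * mu M < (lambda1 M)^2 \<and> \<tau> = 1) \<or>
         (4 * mu M \<le> (lambda1 M)^2 \<and> \<tau>^4 \<le> 1 + (1/3) * (kappa M) powr (-2))"
  shows "{e', f'} \<subseteq> {e, f, -e, -f}"
proof -
  let ?Q = "\<lambda>v. lattice_form M v v" and ?b = "\<bar>lattice_form M e f\<bar>"
  have sym: "transpose M = M" using assms(1) by (simp add: spd2_def)
  have off_axes: "?Q f + ?Q e - 2 * ?b \<le> ?Q (x *s e + y *s f)"
    if "2 * ?b \<le> ?Q e" "x \<noteq> 0" "y \<noteq> 0" for x y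
    using lattice_form_off_axes_ge[OF sym assms(3) that] .
  have "\<tau> ^ 4 < 4 \<and> (\<forall>x y. x \<noteq> 0 \<longrightarrow> y \<noteq> 0 \<longrightarrow> \<tau> ^ 4 * ?Q f < ?Q (x *s e + y *s f))"
    using assms(8) unfolding lambda1_sq[OF assms(1,3)] mu_eq[OF assms(1,3)]
  proof (elim disjE conjE)
    assume "2 * ?b < ?Q e" and "\<tau> = 1"
    then show ?thesis using off_axes by fastforce
  next
    assume "4 * ?b \<le> ?Q e" and "\<tau> ^ 4 \<le> 1 + 1 / 3 * kappa M powr - 2"
    note gap = off_axes_gap_of_kappa[OF assms(1,3) this]
    show ?thesis using gap off_axes \<open>4 * ?b \<le> ?Q e\<close> by fastforce
  qed
  moreover have "?Q v \<le> \<tau> ^ 4 * ?Q w" if "lattice_form M' v v \<le> lattice_form M' w w" for v w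
    using lattice_form_le_loewner[OF _ assms(6,7) that] assms(5) by simp
  ultimately show ?thesis
    using reduced_basis_subset_pm_if_off_axes_gap[OF assms(1,3,4), of "\<tau> ^ 4"] by simp
qed

end
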